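(* Let $p_U=(p_1,\dots,p_M)$ be a probability distribution on $\{1,\dots,M\}$ with all $p_i>0$, and let $m$ be a positive integer with $m> -\log_2\min_i p_i$. Let $V$ be uniformly distributed on a set of $2^m$ elements (equivalently, $V=(C_1,\dots,C_m)$ with $C_j$ i.i.d. Bernoulli-$\tfrac12$). Then there exists a map $f$ from the $2^m$ values of $V$ to $\{1,\dots,M\}$ such that $U'=f(V)$ has a distribution $p_{U'}$ with every entry a positive integer multiple of $2^{-m}$ and $$D(p_U\,\|\,p_{U'})=\sum_{i=1}^M p_U(i)\ln\frac{p_U(i)}{p_{U'}(i)}\le M\,2^{-m+1}.$$
   Context: $D(\cdot\|\cdot)$ denotes the Kullback–Leibler divergence, here with the natural logarithm. *)

theory Defs
  imports Complex_Main
begin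

definition pushforward_unif :: "nat \<Rightarrow> (nat \<Rightarrow> nat) \<Rightarrow> nat \<Rightarrow> real" where
  "pushforward_unif m f i = real (card {v \<in> {..<(2::nat)^m}. f v = i}) / 2 ^ m"

definition KL_div :: "nat \<Rightarrow> (nat \<Rightarrow> real) \<Rightarrow> (nat \<Rightarrow> real) \<Rightarrow> real" where
  "KL_div M p q = (\<Sum>i=1..M. p i * ln (p i / q i))"

end

theory Submission
  imports Defs
begin

text \<open>Cut [0, 2^m) at the points \<lfloor>2^m (p_1 + ... + p_i)\<rfloor> and let f send the i-th interval to i.
  Since 2^m p_i > 1, every interval is nonempty, and its length k_i differs from 2^m p_i by
  less than 1. With q_i = k_i / 2^m, the bound ln x \<le> x - 1 gives
  D(p\<parallel>q) \<le> \<Sum> (p_i - q_i)^2 / q_i \<le> \<Sum> 2^-2m / 2^-m = M 2^-m.\<close>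

lemma KL_div_le_chi_square:
  fixes p q :: "nat \<Rightarrow> real"
  assumes "\<forall>i\<in>{1..M}. p i > 0" and "\<forall>i\<in>{1..M}. q i > 0"
    and "(\<Sum>i=1..M. p i) = 1" and "(\<Sum>i=1..M. q i) = 1"
  shows "KL_div M p q \<le> (\<Sum>i=1..M. (p i - q i)^2 / q i)"
proof -
  have "p i * ln (p i / q i) \<le> (p i - q i)^2 / q i + (p i - q i)" if i: "i \<in> {1..M}" for i
  proof -
    have pos: "p i > 0" "q i > 0" using assms(1,2) i by auto
    then have "p i * ln (p i / q i) \<le> p i * (p i / q i - 1)"
      by (intro mult_left_mono ln_le_minus_one) auto
    also have "\<dots> = (p i - q i)^2 / q i + (p i - q i)"
      using pos by (simp add: field_simps power2_eq_square)
    finally show ?thesis .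
  qed
  then have "KL_div M p q \<le> (\<Sum>i=1..M. (p i - q i)^2 / q i + (p i - q i))"
    unfolding KL_div_def by (intro sum_mono) auto
  also have "\<dots> = (\<Sum>i=1..M. (p i - q i)^2 / q i)"
    using assms(3,4) by (simp add: sum.distrib sum_subtractf)
  finally show ?thesis .
qed

lemma KL_div_le_of_uniform_closeness:
  fixes N :: real and p q :: "nat \<Rightarrow> real"
  assumes "N > 0" and "\<forall>i\<in>{1..M}. p i > 0" and q_ge: "\<forall>i\<in>{1..M}. q i \<ge> 1 / N"
    and close: "\<forall>i\<in>{1..M}. \<bar>p i - q i\<bar> \<le> 1 / N"
    and "(\<Sum>i=1..M. p i) = 1" and "(\<Sum>i=1..M. q i) = 1"
  shows "KL_div M p q \<le> real M / N"
proof -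
  have q_pos: "\<forall>i\<in>{1..M}. q i > 0"
    using q_ge \<open>N > 0\<close> by (meson less_le_trans divide_pos_pos zero_less_one)
  have "(p i - q i)^2 / q i \<le> 1 / N" if i: "i \<in> {1..M}" for i
  proof -
    have "(p i - q i)^2 = \<bar>p i - q i\<bar>^2" by simp
    also have "\<dots> \<le> (1 / N)^2" using close i by (intro power_mono) auto
    finally have "(p i - q i)^2 / q i \<le> (1 / N)^2 / q i"
      using q_pos i by (intro divide_right_mono) (auto intro: less_imp_le)
    also have "\<dots> \<le> (1 / N)^2 / (1 / N)"
      using q_ge q_pos i \<open>N > 0\<close> by (intro divide_left_mono) auto
    also have "\<dots> = 1 / N" using \<open>N > 0\<close> by (simp add: power2_eq_square)
    finally show ?thesis .
  qed
  then have "(\<Sum>i=1..M. (p i - q i)^2 / q i) \<le> real M / N"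
    using sum_mono[of "{1..M}" "\<lambda>i. (p i - q i)^2 / q i" "\<lambda>_. 1 / N"] by simp
  with KL_div_le_chi_square[OF assms(2) q_pos assms(5,6)] show ?thesis by linarith
qed

lemma floor_add_minus_floor_bounds:
  fixes a b :: real
  assumes "b > 1"
  shows "\<lfloor>a + b\<rfloor> - \<lfloor>a\<rfloor> \<ge> 1" and "\<bar>of_int (\<lfloor>a + b\<rfloor> - \<lfloor>a\<rfloor>) - b\<bar> < 1"
proof -
  have "of_int \<lfloor>a + b\<rfloor> > a + b - 1" "of_int \<lfloor>a + b\<rfloor> \<le> a + b"
       "of_int \<lfloor>a\<rfloor> > a - 1" "of_int \<lfloor>a\<rfloor> \<le> a"
    by linarith+
  with assms have "of_int (\<lfloor>a + b\<rfloor> - \<lfloor>a\<rfloor>) > (0::real)"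
    and "\<bar>of_int (\<lfloor>a + b\<rfloor> - \<lfloor>a\<rfloor>) - b\<bar> < 1" by linarith+
  then show "\<lfloor>a + b\<rfloor> - \<lfloor>a\<rfloor> \<ge> 1" and "\<bar>of_int (\<lfloor>a + b\<rfloor> - \<lfloor>a\<rfloor>) - b\<bar> < 1" by simp_all
qed

lemma cumulative_floor_thresholds:
  fixes N :: nat and p :: "nat \<Rightarrow> real"
  assumes large: "\<forall>i\<in>{1..M}. real N * p i > 1" and sum_one: "(\<Sum>i=1..M. p i) = 1"
  obtains S :: "nat \<Rightarrow> nat" where "S 0 = 0" and "S M = N"
    and "\<forall>i<M. S i < S (Suc i) \<and> \<bar>real (S (Suc i)) - real (S i) - real N * p (Suc i)\<bar> < 1"
proof -
  define F where "F i = \<lfloor>real N * (\<Sum>j=1..i. p j)\<rfloor>" for i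
  have F_Suc: "F (Suc i) = \<lfloor>real N * (\<Sum>j=1..i. p j) + real N * p (Suc i)\<rfloor>" for i
    unfolding F_def by (simp add: sum.cl_ivl_Suc distrib_left)
  have step: "F (Suc i) - F i \<ge> 1 \<and> \<bar>of_int (F (Suc i) - F i) - real N * p (Suc i)\<bar> < 1"
    if "i < M" for i
    using floor_add_minus_floor_bounds[of "real N * p (Suc i)"] large that
    unfolding F_Suc F_def[of i] by auto
  have F_nonneg: "F i \<ge> 0" if "i \<le> M" for i
    using that
  proof (induction i)
    case 0
    then show ?case by (simp add: F_def)
  next
    case (Suc i)
    then show ?case using step[of i] by simp
  qed
  define S where "S i = nat (F i)" for i
  have "S 0 = 0" by (simp add: S_def F_def)
  moreover have "S M = N" using sum_one by (simp add: S_def F_def)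
  moreover have "S i < S (Suc i) \<and> \<bar>real (S (Suc i)) - real (S i) - real N * p (Suc i)\<bar> < 1"
    if "i < M" for i
  proof -
    have "real (S (Suc i)) - real (S i) = of_int (F (Suc i) - F i)"
      using F_nonneg[of i] F_nonneg[of "Suc i"] that by (simp add: S_def)
    with step[OF that] F_nonneg[of i] that show ?thesis by (simp add: S_def)
  qed
  ultimately show thesis using that by blast
qed

definition bucket :: "(nat \<Rightarrow> nat) \<Rightarrow> nat \<Rightarrow> nat" where
  "bucket S v = (LEAST i. v < S i)"

context
  fixes S :: "nat \<Rightarrow> nat" and M :: nat
  assumes S_0: "S 0 = 0" and S_step: "\<And>i. i < M \<Longrightarrow> S i \<le> S (Suc i)"
begin

lemma thresholds_mono:
  assumes "i \<le> j" and "j \<le> M"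
  shows "S i \<le> S j"
  using assms by (induction j rule: dec_induct) (auto intro: order_trans[OF _ S_step])

lemma bucket_in_range:
  assumes "v < S M"
  shows "bucket S v \<in> {1..M}"
proof -
  have "bucket S v \<le> M" unfolding bucket_def using assms by (rule Least_le)
  moreover have "v < S (bucket S v)" unfolding bucket_def using assms by (rule LeastI)
  then have "bucket S v \<noteq> 0" using S_0 by (metis less_nat_zero_code)
  ultimately show ?thesis by auto
qed

lemma bucket_preimage:
  assumes i: "i \<in> {1..M}"
  shows "{v \<in> {..<S M}. bucket S v = i} = {S (i - 1)..<S i}"
proof (intro set_eqI iffI)
  fix v assume "v \<in> {v \<in> {..<S M}. bucket S v = i}"
  then have v: "v < S M" "bucket S v = i" by auto
  have "v < S i" using LeastI[of "\<lambda>j. v < S j", OF v(1)] v(2) by (simp add: bucket_def)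
  moreover have "\<not> v < S (i - 1)"
    using not_less_Least[of "i - 1" "\<lambda>j. v < S j"] v(2) i by (auto simp: bucket_def)
  ultimately show "v \<in> {S (i - 1)..<S i}" by auto
next
  fix v assume v: "v \<in> {S (i - 1)..<S i}"
  have "v < S M" using v thresholds_mono[of i M] i by auto
  moreover have "bucket S v = i" unfolding bucket_def
  proof (rule Least_equality)
    show "v < S i" using v by auto
  next
    fix j assume "v < S j"
    show "i \<le> j"
    proof (rule ccontr)
      assume "\<not> i \<le> j"
      then have "S j \<le> S (i - 1)" using i by (intro thresholds_mono) auto
      with v \<open>v < S j\<close> show False by auto
    qed
  qed
  ultimately show "v \<in> {v \<in> {..<S M}. bucket S v = i}" by auto
qed

lemma pushforward_unif_bucket:
  assumes "S M = 2 ^ m" and "i \<in> {1..M}"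
  shows "pushforward_unif m (bucket S) i = real (S i - S (i - 1)) / 2 ^ m"
  using bucket_preimage[OF assms(2)] assms(1) by (simp add: pushforward_unif_def)

end

lemma sum_pushforward_unif:
  assumes "finite A" and "\<forall>v<(2::nat)^m. f v \<in> A"
  shows "(\<Sum>i\<in>A. pushforward_unif m f i) = 1"
proof -
  have "(\<Sum>i\<in>A. real (card {v \<in> {..<(2::nat)^m}. f v = i})) = real (card {..<(2::nat)^m})"
    using sum.group[of "{..<(2::nat)^m}" A f "\<lambda>_. 1::real"] assms by auto
  then show ?thesis by (simp add: pushforward_unif_def flip: sum_divide_distrib)
qed

lemma scaled_gt_one_of_neg_log_less:
  fixes x :: real
  assumes "x > 0" and "- log 2 x < real m"
  shows "2 ^ m * x > 1"
proof -
  have "x > 2 powr (- real m)"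
    using assms by (metis less_log_iff minus_less_iff one_less_numeral_iff semiring_norm(76))
  then show ?thesis by (simp add: powr_minus powr_realpow field_simps)
qed

lemma dyadic_quantization:
  fixes p :: "nat \<Rightarrow> real"
  assumes large: "\<forall>i\<in>{1..M}. 2 ^ m * p i > 1" and sum_one: "(\<Sum>i=1..M. p i) = 1"
  obtains f :: "nat \<Rightarrow> nat" where "\<forall>v<(2::nat)^m. f v \<in> {1..M}"
    and "\<forall>i\<in>{1..M}. \<exists>k::nat. k \<ge> 1 \<and> pushforward_unif m f i = real k / 2 ^ m"
    and "\<forall>i\<in>{1..M}. \<bar>p i - pushforward_unif m f i\<bar> \<le> 1 / 2 ^ m"
proof -
  obtain S where S_0: "S 0 = 0" and S_M: "S M = 2 ^ m"
    and steps: "\<forall>i<M. S i < S (Suc i) \<and> \<bar>real (S (Suc i)) - real (S i) - 2 ^ m * p (Suc i)\<bar> < 1"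
    using cumulative_floor_thresholds[of M "2 ^ m" p] large sum_one by auto
  have S_step: "S i \<le> S (Suc i)" if "i < M" for i using steps that by (simp add: less_imp_le)
  have "\<forall>v<(2::nat)^m. bucket S v \<in> {1..M}"
    using bucket_in_range[of S M, OF S_0 S_step] S_M by simp
  moreover have "\<exists>k::nat. k \<ge> 1 \<and> pushforward_unif m (bucket S) i = real k / 2 ^ m
      \<and> \<bar>p i - pushforward_unif m (bucket S) i\<bar> \<le> 1 / 2 ^ m" if i: "i \<in> {1..M}" for i
  proof -
    define k where "k = S i - S (i - 1)"
    have "S (i - 1) < S i" and "\<bar>real (S i) - real (S (i - 1)) - 2 ^ m * p i\<bar> < 1"
      using steps[rule_format, of "i - 1"] i by auto
    then have "k \<ge> 1" and k_close: "\<bar>real k - 2 ^ m * p i\<bar> < 1"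
      by (simp_all add: k_def of_nat_diff)
    have q_k: "pushforward_unif m (bucket S) i = real k / 2 ^ m"
      using pushforward_unif_bucket[of S M, OF S_0 S_step S_M i] by (simp add: k_def)
    have "\<bar>p i - real k / 2 ^ m\<bar> = \<bar>real k - 2 ^ m * p i\<bar> / 2 ^ m"
      by (simp add: field_simps abs_minus_commute)
    with k_close have "\<bar>p i - pushforward_unif m (bucket S) i\<bar> \<le> 1 / 2 ^ m"
      by (simp add: q_k divide_right_mono)
    with \<open>k \<ge> 1\<close> q_k show ?thesis by blast
  qed
  ultimately show thesis using that by metis
qed

theorem mainTheorem3:
  fixes M m :: nat and p :: "nat \<Rightarrow> real"
  assumes "M \<ge> 1"
    and "\<forall>i\<in>{1..M}. p i > 0"
    and "(\<Sum>i=1..M. p i) = 1"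
    and "m > 0"
    and "real m > - log 2 (Min (p ` {1..M}))"
  shows "\<exists>f :: nat \<Rightarrow> nat.
           (\<forall>v<(2::nat)^m. f v \<in> {1..M}) \<and>
           (\<forall>i\<in>{1..M}. \<exists>k::nat. k \<ge> 1 \<and> pushforward_unif m f i = real k / 2 ^ m) \<and>
           KL_div M p (pushforward_unif m f) \<le> real M * 2 powr (1 - real m)"
proof -
  have "Min (p ` {1..M}) > 0" using assms(1,2) by (subst Min_gr_iff) auto
  then have "2 ^ m * Min (p ` {1..M}) > 1" using assms(5) by (intro scaled_gt_one_of_neg_log_less) auto
  moreover have "2 ^ m * Min (p ` {1..M}) \<le> 2 ^ m * p i" if "i \<in> {1..M}" for i
    using that by (intro mult_left_mono Min_le) auto
  ultimately have large: "\<forall>i\<in>{1..M}. 2 ^ m * p i > 1" by (meson less_le_trans)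
  obtain f where range: "\<forall>v<(2::nat)^m. f v \<in> {1..M}"
    and multiple: "\<forall>i\<in>{1..M}. \<exists>k::nat. k \<ge> 1 \<and> pushforward_unif m f i = real k / 2 ^ m"
    and close: "\<forall>i\<in>{1..M}. \<bar>p i - pushforward_unif m f i\<bar> \<le> 1 / 2 ^ m"
    using dyadic_quantization[OF large assms(3)] by blast
  have "\<forall>i\<in>{1..M}. pushforward_unif m f i \<ge> 1 / 2 ^ m"
    using multiple by (auto simp: divide_right_mono)
  moreover have "(\<Sum>i=1..M. pushforward_unif m f i) = 1" by (rule sum_pushforward_unif) (use range in auto)
  ultimately have "KL_div M p (pushforward_unif m f) \<le> real M / 2 ^ m"
    using KL_div_le_of_uniform_closeness[of "2 ^ m" M p] assms(2,3) close by simp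
  also have "\<dots> \<le> real M * 2 powr (1 - real m)"
    by (simp add: powr_diff powr_realpow divide_right_mono)
  finally show ?thesis using range multiple by blast
qed

end
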